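(* Assume (MA1), (MA2), (MA5) and (MA6) hold and let the sequences be generated by Algorithm R2N. If the algorithm generates only finitely many successful iterations, then there is $x^*\in\mathbb{R}^n$ with $x_k=x^*$ for all sufficiently large $k$, and $x^*$ is first-order stationary, i.e. $0\in\nabla f(x^* )+\partial h(x^* )$.
   Context: Setting: $f:\mathbb{R}^n\to\mathbb{R}$ continuously differentiable, $h:\mathbb{R}^n\to\mathbb{R}\cup\{+\infty\}$ proper lower semicontinuous; $\partial$ = limiting subdifferential; $\|\cdot\|$ Euclidean norm on vectors, spectral norm on matrices. A function $g$ is prox-bounded if there exist $\nu>0$, $x$ with $\inf_y g(y)+\frac1{2\nu}\|y-x\|^2>-\infty$; its threshold is the supremum of such $\nu$. For each $x$, $B(x)$ is symmetric and $\psi(\cdot;x):\mathbb{R}^n\to\mathbb{R}\cup\{+\infty\}$. $\varphi(s;x)=f(x)+\nabla f(x)^Ts+\tfrac12s^TB(x)s$, $m(s;x,\sigma)=\varphi(s;x)+\tfrac12\sigma\|s\|^2+\psi(s;x)$; $\varphi_{cp}(s;x)=f(x)+\nabla f(x)^Ts$, $m_{cp}(s;x,\nu^{-1})=\varphi_{cp}(s;x)+\tfrac12\nu^{-1}\|s\|^2+\psi(s;x)$, $P_{cp}(x,\nu^{-1})=\operatorname{argmin}_s m_{cp}(s;x,\nu^{-1})$, and for $s_{cp}\in P_{cp}(x,\nu^{-1})$, $\xi_{cp}(x,\nu^{-1})=f(x)+h(x)-(\varphi_{cp}(s_{cp};x)+\psi(s_{cp};x))$. (MA1): for every $x$, $\psi(\cdot;x)$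 is proper, lsc, prox-bounded with threshold $\lambda_x$, $\psi(0;x)=h(x)$, $\partial\psi(0;x)=\partial h(x)$. (MA2): there is $\lambda\in(0,+\infty]$ with $\lambda_x\ge\lambda$ for all $x$ (convention $1/\infty=0$). (MA5): there is $\kappa_m>0$ such that for all $k$, $|(f+h)(x_k+s_k)-(\varphi(s_k;x_k)+\psi(s_k;x_k))|\le\kappa_m(1+\|B_k\|)\|s_k\|^2$. (MA6): there are $\mu>0$ and $0\le p\le1$ such that $\|B_k\|\le\mu(1+|\mathcal S_k|^p)$ for all $k\in\mathbb N$ (equivalently $\max_{0\le j\le k}\|B_j\|\le\mu(1+|\mathcal S_k|^p)$ for all $k$). Algorithm R2N: constants $0<\theta_1<1<\theta_2$, $0<\eta_1\le\eta_2<1$, $0<\gamma_3\le1<\gamma_1\le\gamma_2$; $x_0$ with $h(x_0)<\infty$, $\sigma_0>0$. For $k=0,1,\dots$: choose symmetric $B_k=B(x_k)$; set $\nu_k=\theta_1/(\|B_k\|+\sigma_k)$; compute $s_{k,cp}\in P_{cp}(x_k,\nu_k^{-1})$ and $\xi_{cp}(x_k,\nu_k^{-1})$ (using $s_{k,cp}$); compute $s_k$ with $m(s_k;x_k,\sigma_k)\le m(s_{k,cp};x_k,\sigma_k)$; if $\|s_k\|>\theta_2\|s_{k,cp}\|$, reset $s_k=s_{k,cp}$; compute $\rho_k=\frac{(f+h)(x_k)-(f+h)(x_k+s_k)}{\varphi(0;x_k)+\psi(0;x_k)-\varphi(s_k;x_k)-\psi(s_k;x_k)}$ (extended arithmetic: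 $\pm\infty\cdot0=0$, $(\pm\infty)/(\pm\infty)=0$); if $\rho_k\ge\eta_1$ set $x_{k+1}=x_k+s_k$, else $x_{k+1}=x_k$; choose $\sigma_{k+1}\in[\gamma_3\sigma_k,\sigma_k]$ if $\rho_k\ge\eta_2$ (very successful), $\sigma_{k+1}\in[\sigma_k,\gamma_1\sigma_k]$ if $\eta_1\le\rho_k<\eta_2$, $\sigma_{k+1}\in[\gamma_1\sigma_k,\gamma_2\sigma_k]$ if $\rho_k<\eta_1$ (unsuccessful). $\mathcal S=\{k:\rho_k\ge\eta_1\}$ (successful iterations), $\mathcal S_k=\{i\in\mathcal S:i\le k\}$, $\mathcal U=\mathbb N\setminus\mathcal S$, $\mathcal U_k=\{i\in\mathcal U:i\le k\}$. *)

theory Defs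
  imports "HOL-Analysis.Analysis"
begin

type_synonym 'n vec = "real ^ 'n"
type_synonym 'n mat = "real ^ 'n ^ 'n"

definition mnorm :: "'n::finite mat \<Rightarrow> real" where
  "mnorm B = onorm (\<lambda>v. B *v v)"

definition symmetric_mat :: "'n::finite mat \<Rightarrow> bool" where
  "symmetric_mat B \<longleftrightarrow> transpose B = B"

definition proper_fun :: "('a \<Rightarrow> ereal) \<Rightarrow> bool" where
  "proper_fun g \<longleftrightarrow> (\<forall>x. g x \<noteq> -\<infinity>) \<and> (\<exists>x. g x \<noteq> \<infinity>)"

definition lsc_fun :: "('a::metric_space \<Rightarrow> ereal) \<Rightarrow> bool" where
  "lsc_fun g \<longleftrightarrow> (\<forall>x X. X \<longlonglongrightarrow> x \<longrightarrow> g x \<le> liminf (\<lambda>k. g (X k)))"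

definition prox_bounded_with :: "('n::finite vec \<Rightarrow> ereal) \<Rightarrow> real \<Rightarrow> bool" where
  "prox_bounded_with g \<nu> \<longleftrightarrow> \<nu> > 0 \<and>
     (\<exists>x. (INF y. g y + ereal ((norm (y - x))\<^sup>2 / (2 * \<nu>))) > -\<infinity>)"

definition prox_bounded :: "('n::finite vec \<Rightarrow> ereal) \<Rightarrow> bool" where
  "prox_bounded g \<longleftrightarrow> (\<exists>\<nu>. prox_bounded_with g \<nu>)"

definition prox_threshold :: "('n::finite vec \<Rightarrow> ereal) \<Rightarrow> ereal" where
  "prox_threshold g = (SUP \<nu> \<in> {\<nu>. prox_bounded_with g \<nu>}. ereal \<nu>)"

definition frechet_subdiff :: "('n::finite vec \<Rightarrow> ereal) \<Rightarrow> 'n vec \<Rightarrow> 'n vec set" where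
  "frechet_subdiff g x = {v. \<bar>g x\<bar> \<noteq> \<infinity> \<and>
     (\<forall>\<epsilon>>0. \<exists>\<delta>>0. \<forall>y. norm (y - x) < \<delta> \<longrightarrow>
        g y \<ge> g x + ereal (v \<bullet> (y - x) - \<epsilon> * norm (y - x)))}"

definition limiting_subdiff :: "('n::finite vec \<Rightarrow> ereal) \<Rightarrow> 'n vec \<Rightarrow> 'n vec set" where
  "limiting_subdiff g x = {v. \<bar>g x\<bar> \<noteq> \<infinity> \<and>
     (\<exists>X V. X \<longlonglongrightarrow> x \<and> (\<lambda>k. g (X k)) \<longlonglongrightarrow> g x \<and> V \<longlonglongrightarrow> v \<and>
            (\<forall>k. V k \<in> frechet_subdiff g (X k)))}"

definition argmin_set :: "('a \<Rightarrow> ereal) \<Rightarrow> 'a set" where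
  "argmin_set F = {s. \<forall>t. F s \<le> F t}"

definition phi_model :: "('n::finite vec \<Rightarrow> real) \<Rightarrow> ('n vec \<Rightarrow> 'n vec) \<Rightarrow> 'n mat
    \<Rightarrow> 'n vec \<Rightarrow> 'n vec \<Rightarrow> real" where
  "phi_model f g B x s = f x + g x \<bullet> s + (s \<bullet> (B *v s)) / 2"

definition phi_cp :: "('n::finite vec \<Rightarrow> real) \<Rightarrow> ('n vec \<Rightarrow> 'n vec) \<Rightarrow> 'n vec \<Rightarrow> 'n vec \<Rightarrow> real" where
  "phi_cp f g x s = f x + g x \<bullet> s"

text \<open>m(s;x,sigma) = phi(s;x) + sigma |s|^2/2 + psi(s;x); psi x s stands for psi(s;x).\<close>
definition m_model :: "('n::finite vec \<Rightarrow> real) \<Rightarrow> ('n vec \<Rightarrow> 'n vec) \<Rightarrow> 'n mat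
    \<Rightarrow> ('n vec \<Rightarrow> 'n vec \<Rightarrow> ereal) \<Rightarrow> 'n vec \<Rightarrow> real \<Rightarrow> 'n vec \<Rightarrow> ereal" where
  "m_model f g B \<psi> x \<sigma> s = ereal (phi_model f g B x s + \<sigma> * (norm s)\<^sup>2 / 2) + \<psi> x s"

text \<open>m_cp(s;x,nu^{-1}) = phi_cp(s;x) + |s|^2/(2 nu) + psi(s;x).\<close>
definition m_cp :: "('n::finite vec \<Rightarrow> real) \<Rightarrow> ('n vec \<Rightarrow> 'n vec)
    \<Rightarrow> ('n vec \<Rightarrow> 'n vec \<Rightarrow> ereal) \<Rightarrow> 'n vec \<Rightarrow> real \<Rightarrow> 'n vec \<Rightarrow> ereal" where
  "m_cp f g \<psi> x \<nu> s = ereal (phi_cp f g x s + (norm s)\<^sup>2 / (2 * \<nu>)) + \<psi> x s"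

text \<open>Ratio rho_k in extended arithmetic (ereal: infinity * 0 = 0, inverse infinity = 0).\<close>
definition rho_ratio :: "('n::finite vec \<Rightarrow> real) \<Rightarrow> ('n vec \<Rightarrow> 'n vec) \<Rightarrow> ('n vec \<Rightarrow> ereal)
    \<Rightarrow> 'n mat \<Rightarrow> ('n vec \<Rightarrow> 'n vec \<Rightarrow> ereal) \<Rightarrow> 'n vec \<Rightarrow> 'n vec \<Rightarrow> ereal" where
  "rho_ratio f g h B \<psi> x s =
     ((ereal (f x) + h x) - (ereal (f (x + s)) + h (x + s))) /
     ((ereal (phi_model f g B x 0) + \<psi> x 0) - (ereal (phi_model f g B x s) + \<psi> x s))"

text \<open>|S_k|^p with the convention 0^0 = 1.\<close>
definition card_pow :: "nat \<Rightarrow> real \<Rightarrow> real" where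
  "card_pow n p = (if p = 0 then 1 else real n powr p)"

end

theory Submission
  imports Defs
begin

text \<open>After the last successful iteration the iterate freezes at some \<open>x\<^sup>*\<close> and every
  iteration is unsuccessful, so \<open>\<sigma>\<^sub>k\<close> grows geometrically while \<open>B\<^sub>k = B(x\<^sup>*)\<close> stays fixed.
  The Cauchy step yields a model decrease of order \<open>(\<parallel>B\<^sub>k\<parallel> + \<sigma>\<^sub>k) \<parallel>s\<^sub>k\<^sub>,\<^sub>c\<^sub>p\<parallel>\<^sup>2\<close>, whereas by (MA5) the
  model error is only of order \<open>(1 + \<parallel>B\<^sub>k\<parallel>) \<parallel>s\<^sub>k\<^sub>,\<^sub>c\<^sub>p\<parallel>\<^sup>2\<close>; hence once \<open>\<sigma>\<^sub>k\<close> is large a nonzero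
  Cauchy step would be accepted. So \<open>s\<^sub>k\<^sub>,\<^sub>c\<^sub>p = 0\<close>, i.e. \<open>0\<close> minimises the proximal-linear model,
  which makes \<open>-\<nabla>f(x\<^sup>*)\<close> a Frechet subgradient of \<open>\<psi>(\<cdot>;x\<^sup>*)\<close> at \<open>0\<close>, and (MA1) transfers this
  to \<open>\<partial>h(x\<^sup>*)\<close>.\<close>

lemma mnorm_nonneg: "0 \<le> mnorm B"
  unfolding mnorm_def by (simp add: onorm_pos_le linear_conv_bounded_linear)

lemma inner_mult_vec_le_mnorm: "s \<bullet> (B *v s) \<le> mnorm B * (norm s)\<^sup>2"
proof -
  have "s \<bullet> (B *v s) \<le> norm s * norm (B *v s)" by (rule norm_cauchy_schwarz)
  also have "\<dots> \<le> norm s * (mnorm B * norm s)"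
    unfolding mnorm_def
    by (intro mult_left_mono onorm) (simp_all add: linear_conv_bounded_linear)
  finally show ?thesis by (simp add: power2_eq_square mult_ac)
qed

lemma ereal_finite_of_abs_diff_le:
  fixes a b :: ereal
  assumes "a \<noteq> -\<infinity>" "b \<noteq> -\<infinity>" "\<bar>(ereal c + a) - (ereal d + b)\<bar> \<le> ereal r"
  shows "\<bar>a\<bar> \<noteq> \<infinity>" "\<bar>b\<bar> \<noteq> \<infinity>"
  using assms by (cases a; cases b; auto)+

lemma frechet_subdiff_subset_limiting_subdiff:
  "frechet_subdiff g x \<subseteq> limiting_subdiff g x"
proof
  fix v assume "v \<in> frechet_subdiff g x"
  then show "v \<in> limiting_subdiff g x"
    unfolding limiting_subdiff_def frechet_subdiff_def
    by (intro CollectI conjI exI[of _ "\<lambda>_. x"] exI[of _ "\<lambda>_. v"]) auto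
qed

text \<open>For \<open>\<parallel>y\<parallel> < 2\<nu>\<epsilon>\<close> the proximal term \<open>\<parallel>y\<parallel>\<^sup>2/(2\<nu>)\<close> is below \<open>\<epsilon>\<parallel>y\<parallel>\<close>.\<close>
lemma frechet_subgradient_of_zero_cauchy_point:
  assumes nu: "0 < \<nu>"
    and argmin: "0 \<in> argmin_set (m_cp f gradf \<psi> x \<nu>)"
    and finite: "\<bar>\<psi> x 0\<bar> \<noteq> \<infinity>"
  shows "- gradf x \<in> frechet_subdiff (\<psi> x) 0"
  unfolding frechet_subdiff_def
proof (intro CollectI conjI allI impI finite)
  obtain P0 where P0: "\<psi> x 0 = ereal P0" using finite by (cases "\<psi> x 0") auto
  fix \<epsilon> :: real assume "0 < \<epsilon>"
  show "\<exists>\<delta>>0. \<forall>y. norm (y - 0) < \<delta> \<longrightarrow>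
          \<psi> x 0 + ereal (- gradf x \<bullet> (y - 0) - \<epsilon> * norm (y - 0)) \<le> \<psi> x y"
  proof (intro exI[of _ "2 * \<nu> * \<epsilon>"] conjI allI impI)
    show "0 < 2 * \<nu> * \<epsilon>" using nu \<open>0 < \<epsilon>\<close> by simp
    fix y :: "'a vec" assume y: "norm (y - 0) < 2 * \<nu> * \<epsilon>"
    have min: "m_cp f gradf \<psi> x \<nu> 0 \<le> m_cp f gradf \<psi> x \<nu> y"
      using argmin unfolding argmin_set_def by blast
    have prox: "(norm y)\<^sup>2 / (2 * \<nu>) \<le> \<epsilon> * norm y"
    proof -
      have "(norm y)\<^sup>2 \<le> (2 * \<nu> * \<epsilon>) * norm y"
        using y by (simp add: power2_eq_square mult_right_mono)
      then show ?thesis using nu by (simp add: divide_le_eq mult_ac)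
    qed
    show "\<psi> x 0 + ereal (- gradf x \<bullet> (y - 0) - \<epsilon> * norm (y - 0)) \<le> \<psi> x y"
      using min prox P0 unfolding m_cp_def phi_cp_def by (cases "\<psi> x y") auto
  qed
qed

lemma stationary_of_zero_cauchy_point:
  assumes "0 < \<nu>" "0 \<in> argmin_set (m_cp f gradf \<psi> x \<nu>)"
    and "\<bar>h x\<bar> \<noteq> \<infinity>" "\<psi> x 0 = h x" "limiting_subdiff (\<psi> x) 0 = limiting_subdiff h x"
  shows "- gradf x \<in> limiting_subdiff h x"
  using frechet_subgradient_of_zero_cauchy_point[OF assms(1,2)] assms(3-5)
    frechet_subdiff_subset_limiting_subdiff by fastforce

lemma le_ratio_of_abs_diff_le:
  fixes num den D E \<eta> :: real
  assumes "0 < D" "D \<le> den" "\<bar>num - den\<bar> \<le> E" "E \<le> (1 - \<eta>) * D" "\<eta> \<le> 1"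
  shows "\<eta> \<le> num / den"
proof -
  have "(1 - \<eta>) * D \<le> (1 - \<eta>) * den" using assms by (intro mult_left_mono) auto
  then have "\<eta> * den \<le> num" using assms by (simp add: algebra_simps abs_le_iff)
  then show ?thesis using assms by (simp add: pos_le_divide_eq)
qed

text \<open>The Cauchy decrease \<open>\<parallel>s\<^sub>c\<^sub>p\<parallel>\<^sup>2/(2\<nu>)\<close> with \<open>\<nu> = \<theta>\<^sub>1/(\<parallel>B\<parallel> + \<sigma>)\<close> survives the passage to the
  step \<open>s\<close>, up to the quadratic terms \<open>(\<parallel>B\<parallel> + \<sigma>)\<parallel>s\<^sub>c\<^sub>p\<parallel>\<^sup>2/2\<close> that \<open>m\<close> adds to \<open>m\<^sub>c\<^sub>p\<close>.\<close>
lemma model_decrease_ge_cauchy_decrease: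
  fixes x s scp :: "'n::finite vec" and Bm :: "'n mat"
  assumes sigma: "0 < \<sigma>" and theta1: "0 < \<theta>\<^sub>1"
    and P0: "\<psi> x 0 = ereal P0" and Ps: "\<psi> x s = ereal Ps" and not_minf: "\<psi> x scp \<noteq> -\<infinity>"
    and cauchy: "scp \<in> argmin_set (m_cp f gradf \<psi> x (\<theta>\<^sub>1 / (mnorm Bm + \<sigma>)))"
    and model: "m_model f gradf Bm \<psi> x \<sigma> s \<le> m_model f gradf Bm \<psi> x \<sigma> scp"
  shows "(mnorm Bm + \<sigma>) * (norm scp)\<^sup>2 * (1 - \<theta>\<^sub>1) / (2 * \<theta>\<^sub>1)
           \<le> P0 - (gradf x \<bullet> s + s \<bullet> (Bm *v s) / 2 + Ps)"
proof -
  define Bn nc where "Bn = mnorm Bm" and "nc = norm scp"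
  have Bn: "0 \<le> Bn" unfolding Bn_def by (rule mnorm_nonneg)
  have cp: "m_cp f gradf \<psi> x (\<theta>\<^sub>1 / (Bn + \<sigma>)) scp \<le> m_cp f gradf \<psi> x (\<theta>\<^sub>1 / (Bn + \<sigma>)) 0"
    using cauchy unfolding argmin_set_def Bn_def by blast
  obtain Pc where Pc: "\<psi> x scp = ereal Pc"
    using cp not_minf P0 unfolding m_cp_def by (cases "\<psi> x scp") auto
  have "gradf x \<bullet> scp + nc\<^sup>2 / (2 * (\<theta>\<^sub>1 / (Bn + \<sigma>))) + Pc \<le> P0"
    using cp P0 Pc unfolding m_cp_def phi_cp_def nc_def by simp
  moreover have "gradf x \<bullet> s + s \<bullet> (Bm *v s) / 2 + \<sigma> * (norm s)\<^sup>2 / 2 + Ps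
      \<le> gradf x \<bullet> scp + scp \<bullet> (Bm *v scp) / 2 + \<sigma> * nc\<^sup>2 / 2 + Pc"
    using model Ps Pc unfolding m_model_def phi_model_def nc_def by simp
  moreover have "scp \<bullet> (Bm *v scp) \<le> Bn * nc\<^sup>2"
    unfolding Bn_def nc_def by (rule inner_mult_vec_le_mnorm)
  moreover have "nc\<^sup>2 / (2 * (\<theta>\<^sub>1 / (Bn + \<sigma>))) = (Bn + \<sigma>) * nc\<^sup>2 / (2 * \<theta>\<^sub>1)"
    using Bn sigma theta1 by (simp add: field_simps)
  moreover have "(Bn + \<sigma>) * nc\<^sup>2 * (1 - \<theta>\<^sub>1) / (2 * \<theta>\<^sub>1)
      = (Bn + \<sigma>) * nc\<^sup>2 / (2 * \<theta>\<^sub>1) - Bn * nc\<^sup>2 / 2 - \<sigma> * nc\<^sup>2 / 2"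
    using theta1 by (simp add: field_simps)
  moreover have "0 \<le> \<sigma> * (norm s)\<^sup>2 / 2" using sigma by simp
  ultimately have "(Bn + \<sigma>) * nc\<^sup>2 * (1 - \<theta>\<^sub>1) / (2 * \<theta>\<^sub>1)
      \<le> P0 - (gradf x \<bullet> s + s \<bullet> (Bm *v s) / 2 + Ps)"
    by linarith
  then show ?thesis by (simp only: Bn_def nc_def)
qed

lemma ratio_ge_if_sigma_large:
  fixes Num Den Bn \<sigma> \<kappa> nc :: real
  assumes Bn: "0 \<le> Bn" and sigma: "0 < \<sigma>" and theta1: "0 < \<theta>\<^sub>1" "\<theta>\<^sub>1 < 1" and eta1: "\<eta>\<^sub>1 < 1"
    and nc: "0 < nc"
    and decrease: "(Bn + \<sigma>) * nc\<^sup>2 * (1 - \<theta>\<^sub>1) / (2 * \<theta>\<^sub>1) \<le> Den"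
    and error: "\<bar>Num - Den\<bar> \<le> \<kappa> * (1 + Bn) * \<theta>\<^sub>2\<^sup>2 * nc\<^sup>2"
    and sigma_large: "2 * \<theta>\<^sub>1 * \<kappa> * \<theta>\<^sub>2\<^sup>2 * (1 + Bn) < \<sigma> * (1 - \<eta>\<^sub>1) * (1 - \<theta>\<^sub>1)"
  shows "\<eta>\<^sub>1 \<le> Num / Den"
proof (rule le_ratio_of_abs_diff_le[OF _ decrease error _ less_imp_le[OF eta1]])
  show "0 < (Bn + \<sigma>) * nc\<^sup>2 * (1 - \<theta>\<^sub>1) / (2 * \<theta>\<^sub>1)" using Bn sigma theta1 nc by simp
  have "\<kappa> * (1 + Bn) * \<theta>\<^sub>2\<^sup>2 * nc\<^sup>2 = 2 * \<theta>\<^sub>1 * \<kappa> * \<theta>\<^sub>2\<^sup>2 * (1 + Bn) * nc\<^sup>2 / (2 * \<theta>\<^sub>1)"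
    using theta1 by simp
  also have "\<dots> \<le> \<sigma> * (1 - \<eta>\<^sub>1) * (1 - \<theta>\<^sub>1) * nc\<^sup>2 / (2 * \<theta>\<^sub>1)"
    using sigma_large theta1 by (intro divide_right_mono mult_right_mono) auto
  also have "\<dots> = \<sigma> * ((1 - \<eta>\<^sub>1) * (1 - \<theta>\<^sub>1) * nc\<^sup>2 / (2 * \<theta>\<^sub>1))" by simp
  also have "\<dots> \<le> (Bn + \<sigma>) * ((1 - \<eta>\<^sub>1) * (1 - \<theta>\<^sub>1) * nc\<^sup>2 / (2 * \<theta>\<^sub>1))"
    using Bn eta1 theta1 by (intro mult_right_mono) auto
  finally show "\<kappa> * (1 + Bn) * \<theta>\<^sub>2\<^sup>2 * nc\<^sup>2 \<le> (1 - \<eta>\<^sub>1) * ((Bn + \<sigma>) * nc\<^sup>2 * (1 - \<theta>\<^sub>1) / (2 * \<theta>\<^sub>1))"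
    by (simp add: mult_ac)
qed

lemma step_successful_if_sigma_large:
  fixes x s st scp :: "'n::finite vec" and Bm :: "'n mat"
  assumes sigma: "0 < \<sigma>" and theta1: "0 < \<theta>\<^sub>1" "\<theta>\<^sub>1 < 1" and eta1: "\<eta>\<^sub>1 < 1" and kappa: "0 \<le> \<kappa>"
    and h_x: "\<bar>h x\<bar> \<noteq> \<infinity>" "\<psi> x 0 = h x"
    and not_minf: "\<And>t. \<psi> x t \<noteq> -\<infinity>" "h (x + s) \<noteq> -\<infinity>"
    and cauchy: "scp \<in> argmin_set (m_cp f gradf \<psi> x (\<theta>\<^sub>1 / (mnorm Bm + \<sigma>)))"
    and trial: "m_model f gradf Bm \<psi> x \<sigma> st \<le> m_model f gradf Bm \<psi> x \<sigma> scp"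
    and step: "s = (if \<theta>\<^sub>2 * norm scp < norm st then scp else st)" and theta2: "1 \<le> \<theta>\<^sub>2"
    and accuracy: "\<bar>(ereal (f (x + s)) + h (x + s)) - (ereal (phi_model f gradf Bm x s) + \<psi> x s)\<bar>
                     \<le> ereal (\<kappa> * (1 + mnorm Bm) * (norm s)\<^sup>2)"
    and nonzero: "scp \<noteq> 0"
    and sigma_large: "2 * \<theta>\<^sub>1 * \<kappa> * \<theta>\<^sub>2\<^sup>2 * (1 + mnorm Bm) < \<sigma> * (1 - \<eta>\<^sub>1) * (1 - \<theta>\<^sub>1)"
  shows "ereal \<eta>\<^sub>1 \<le> rho_ratio f gradf h Bm \<psi> x s"
proof -
  have model: "m_model f gradf Bm \<psi> x \<sigma> s \<le> m_model f gradf Bm \<psi> x \<sigma> scp"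
    using step trial by simp
  have step_le: "norm s \<le> \<theta>\<^sub>2 * norm scp"
    using step theta2 mult_right_mono[of 1 \<theta>\<^sub>2 "norm scp"] by auto
  define Bn nc where "Bn = mnorm Bm" and "nc = norm scp"
  have Bn: "0 \<le> Bn" unfolding Bn_def by (rule mnorm_nonneg)
  have nc: "0 < nc" using nonzero unfolding nc_def by simp
  obtain P0 where hP0: "h x = ereal P0" using h_x by (cases "h x") auto
  then have P0: "\<psi> x 0 = ereal P0" using h_x by simp
  obtain H Ps where H: "h (x + s) = ereal H" and Ps: "\<psi> x s = ereal Ps"
    using ereal_finite_of_abs_diff_le[OF not_minf(2) not_minf(1) accuracy]
    by (cases "h (x + s)"; cases "\<psi> x s") auto
  define D Den Num where "D = (Bn + \<sigma>) * nc\<^sup>2 * (1 - \<theta>\<^sub>1) / (2 * \<theta>\<^sub>1)"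
    and "Den = P0 - (gradf x \<bullet> s + s \<bullet> (Bm *v s) / 2 + Ps)"
    and "Num = f x + P0 - f (x + s) - H"
  have D_le: "D \<le> Den"
    unfolding D_def Den_def Bn_def nc_def
    by (rule model_decrease_ge_cauchy_decrease[OF sigma theta1(1) P0 Ps not_minf(1) cauchy model])
  have "0 < D" unfolding D_def using Bn sigma theta1 nc by simp
  with D_le have Den_pos: "0 < Den" by linarith
  have "(norm s)\<^sup>2 \<le> (\<theta>\<^sub>2 * nc)\<^sup>2"
    using step_le unfolding nc_def by (intro power_mono) auto
  then have "\<kappa> * (1 + Bn) * (norm s)\<^sup>2 \<le> \<kappa> * (1 + Bn) * (\<theta>\<^sub>2 * nc)\<^sup>2"
    using kappa Bn by (intro mult_left_mono) auto
  then have err: "\<bar>Num - Den\<bar> \<le> \<kappa> * (1 + Bn) * \<theta>\<^sub>2\<^sup>2 * nc\<^sup>2"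
    using accuracy H Ps unfolding Num_def Den_def phi_model_def Bn_def
    by (simp add: power_mult_distrib algebra_simps)
  have "\<eta>\<^sub>1 \<le> Num / Den"
    using ratio_ge_if_sigma_large[OF Bn sigma theta1 eta1 nc D_le[unfolded D_def] err] sigma_large
    unfolding Bn_def by simp
  moreover have "rho_ratio f gradf h Bm \<psi> x s = ereal (Num / Den)"
    using Den_pos hP0 P0 H Ps
    unfolding rho_ratio_def phi_model_def Num_def Den_def
    by (simp add: ereal_divide) (simp add: algebra_simps)
  ultimately show ?thesis by simp
qed

lemma iterates_eventually_constant:
  assumes "finite {k. P k}" "\<And>k. x (Suc k) = (if P k then x k + s k else x k)"
  obtains N where "\<And>k. N \<le> k \<Longrightarrow> \<not> P k" "\<And>k. N \<le> k \<Longrightarrow> x k = x N"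
proof -
  obtain N where "\<And>k. P k \<Longrightarrow> k < N"
    using finite_nat_bounded[OF assms(1)] by (auto simp: subset_iff)
  then have not_P: "\<not> P k" if "N \<le> k" for k
    using that leD by blast
  moreover have "x k = x N" if "N \<le> k" for k
    using that
  proof (induction k rule: dec_induct)
    case (step k) then show ?case using assms(2)[of k] not_P[of k] by simp
  qed simp
  ultimately show thesis using that by blast
qed

lemma geometric_growth_unbounded:
  fixes \<sigma> :: "nat \<Rightarrow> real"
  assumes "1 < \<gamma>" "0 < \<sigma> N" "\<And>k. N \<le> k \<Longrightarrow> \<gamma> * \<sigma> k \<le> \<sigma> (Suc k)"
  shows "\<exists>k\<ge>N. C < \<sigma> k"
proof -
  have growth: "\<gamma> ^ j * \<sigma> N \<le> \<sigma> (N + j)" for j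
  proof (induction j)
    case (Suc j)
    have "\<gamma> ^ Suc j * \<sigma> N \<le> \<gamma> * \<sigma> (N + j)"
      using Suc assms(1) by (simp add: mult.assoc)
    also have "\<dots> \<le> \<sigma> (N + Suc j)" using assms(3)[of "N + j"] by simp
    finally show ?case .
  qed simp
  obtain j where "C / \<sigma> N < \<gamma> ^ j" using real_arch_pow[OF assms(1)] by blast
  then have "C < \<sigma> (N + j)" using growth[of j] assms(2) by (simp add: divide_less_eq)
  then show ?thesis by (intro exI[of _ "N + j"]) simp
qed

lemma regularization_pos:
  fixes \<sigma> :: "nat \<Rightarrow> real" and \<rho> :: "nat \<Rightarrow> ereal"
  assumes "0 < \<sigma> 0" "0 < \<gamma>\<^sub>3" "0 < \<gamma>\<^sub>1"
    and very_successful: "\<And>k. \<rho> k \<ge> ereal \<eta>\<^sub>2 \<Longrightarrow> \<gamma>\<^sub>3 * \<sigma> k \<le> \<sigma> (Suc k)"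
    and successful: "\<And>k. ereal \<eta>\<^sub>1 \<le> \<rho> k \<Longrightarrow> \<rho> k < ereal \<eta>\<^sub>2 \<Longrightarrow> \<sigma> k \<le> \<sigma> (Suc k)"
    and unsuccessful: "\<And>k. \<rho> k < ereal \<eta>\<^sub>1 \<Longrightarrow> \<gamma>\<^sub>1 * \<sigma> k \<le> \<sigma> (Suc k)"
  shows "0 < \<sigma> k"
proof (induction k)
  case (Suc k)
  consider "ereal \<eta>\<^sub>2 \<le> \<rho> k" | "ereal \<eta>\<^sub>1 \<le> \<rho> k" "\<rho> k < ereal \<eta>\<^sub>2" | "\<rho> k < ereal \<eta>\<^sub>1"
    by (meson not_le)
  then show ?case
  proof cases
    case 1 then show ?thesis using very_successful[of k] mult_pos_pos[OF assms(2) Suc] by linarith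
  next
    case 2 then show ?thesis using successful[of k] Suc by linarith
  next
    case 3 then show ?thesis using unsuccessful[of k] mult_pos_pos[OF assms(3) Suc] by linarith
  qed
qed (use assms in simp)

text \<open>(MA5) forces \<open>h(x\<^sub>k + s\<^sub>k)\<close> to be finite, so \<open>h\<close> stays finite along the iterates.\<close>
lemma iterate_value_finite:
  assumes "h (x 0) < \<infinity>" "\<And>y. h y \<noteq> -\<infinity>" "\<And>y t. \<psi> y t \<noteq> -\<infinity>"
    and accuracy: "\<And>k. \<bar>(ereal (f (x k + s k)) + h (x k + s k)) - (ereal (m k) + \<psi> (x k) (s k))\<bar>
                      \<le> ereal (r k)"
    and x_next: "\<And>k. x (Suc k) = (if P k then x k + s k else x k)"
  shows "\<bar>h (x k)\<bar> \<noteq> \<infinity>"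
proof (induction k)
  case 0 show ?case using assms(1) assms(2)[of "x 0"] by (cases "h (x 0)") auto
next
  case (Suc k) show ?case
    using Suc x_next[of k] ereal_finite_of_abs_diff_le(1)[OF assms(2,3) accuracy[of k]] by simp
qed

theorem theorem6p3:
  fixes f :: "'n::finite vec \<Rightarrow> real" and gradf :: "'n vec \<Rightarrow> 'n vec"
    and h :: "'n vec \<Rightarrow> ereal"
    and \<psi> :: "'n vec \<Rightarrow> 'n vec \<Rightarrow> ereal"
    and Bf :: "'n vec \<Rightarrow> 'n mat"
    and \<theta>\<^sub>1 \<theta>\<^sub>2 \<eta>\<^sub>1 \<eta>\<^sub>2 \<gamma>\<^sub>1 \<gamma>\<^sub>2 \<gamma>\<^sub>3 :: real
    and x s st scp :: "nat \<Rightarrow> 'n vec" and B :: "nat \<Rightarrow> 'n mat"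
    and \<sigma> \<nu> :: "nat \<Rightarrow> real" and \<rho> :: "nat \<Rightarrow> ereal"
  (* setting *)
  assumes f_grad: "\<And>y. GDERIV f y :> gradf y"
    and gradf_cont: "continuous_on UNIV gradf"
    and h_proper: "proper_fun h" and h_lsc: "lsc_fun h"
    and Bf_sym: "\<And>y. symmetric_mat (Bf y)"
  (* (MA1) *)
    and MA1: "\<And>y. proper_fun (\<psi> y) \<and> lsc_fun (\<psi> y) \<and> prox_bounded (\<psi> y) \<and>
                  \<psi> y 0 = h y \<and> limiting_subdiff (\<psi> y) 0 = limiting_subdiff h y"
  (* (MA2) *)
    and MA2: "\<exists>lam::ereal. lam > 0 \<and> (\<forall>y. prox_threshold (\<psi> y) \<ge> lam)"
  (* (MA5) *)
    and MA5: "\<exists>\<kappa>m>0. \<forall>k. \<bar>(ereal (f (x k + s k)) + h (x k + s k))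
                   - (ereal (phi_model f gradf (B k) (x k) (s k)) + \<psi> (x k) (s k))\<bar>
                 \<le> ereal (\<kappa>m * (1 + mnorm (B k)) * (norm (s k))\<^sup>2)"
  (* (MA6) *)
    and MA6: "\<exists>\<mu>>0. \<exists>p. 0 \<le> p \<and> p \<le> 1 \<and>
                (\<forall>k. mnorm (B k) \<le> \<mu> * (1 + card_pow (card {i. \<rho> i \<ge> ereal \<eta>\<^sub>1 \<and> i \<le> k}) p))"
  (* constants of Algorithm R2N *)
    and params: "0 < \<theta>\<^sub>1" "\<theta>\<^sub>1 < 1" "1 < \<theta>\<^sub>2" "0 < \<eta>\<^sub>1" "\<eta>\<^sub>1 \<le> \<eta>\<^sub>2" "\<eta>\<^sub>2 < 1"
               "0 < \<gamma>\<^sub>3" "\<gamma>\<^sub>3 \<le> 1" "1 < \<gamma>\<^sub>1" "\<gamma>\<^sub>1 \<le> \<gamma>\<^sub>2"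
    and init: "h (x 0) < \<infinity>" "\<sigma> 0 > 0"
  (* iterations of Algorithm R2N *)
    and B_def: "\<And>k. B k = Bf (x k)"
    and nu_def: "\<And>k. \<nu> k = \<theta>\<^sub>1 / (mnorm (B k) + \<sigma> k)"
    and scp_def: "\<And>k. scp k \<in> argmin_set (m_cp f gradf \<psi> (x k) (\<nu> k))"
    and st_def: "\<And>k. m_model f gradf (B k) \<psi> (x k) (\<sigma> k) (st k)
                      \<le> m_model f gradf (B k) \<psi> (x k) (\<sigma> k) (scp k)"
    and s_def: "\<And>k. s k = (if norm (st k) > \<theta>\<^sub>2 * norm (scp k) then scp k else st k)"
    and rho_def: "\<And>k. \<rho> k = rho_ratio f gradf h (B k) \<psi> (x k) (s k)"
    and x_next: "\<And>k. x (Suc k) = (if \<rho> k \<ge> ereal \<eta>\<^sub>1 then x k + s k else x k)"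
    and sigma_vs: "\<And>k. \<rho> k \<ge> ereal \<eta>\<^sub>2 \<Longrightarrow> \<gamma>\<^sub>3 * \<sigma> k \<le> \<sigma> (Suc k) \<and> \<sigma> (Suc k) \<le> \<sigma> k"
    and sigma_s: "\<And>k. ereal \<eta>\<^sub>1 \<le> \<rho> k \<Longrightarrow> \<rho> k < ereal \<eta>\<^sub>2 \<Longrightarrow>
                      \<sigma> k \<le> \<sigma> (Suc k) \<and> \<sigma> (Suc k) \<le> \<gamma>\<^sub>1 * \<sigma> k"
    and sigma_u: "\<And>k. \<rho> k < ereal \<eta>\<^sub>1 \<Longrightarrow>
                      \<gamma>\<^sub>1 * \<sigma> k \<le> \<sigma> (Suc k) \<and> \<sigma> (Suc k) \<le> \<gamma>\<^sub>2 * \<sigma> k"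
  (* finitely many successful iterations *)
    and fin: "finite {k. \<rho> k \<ge> ereal \<eta>\<^sub>1}"
  shows "\<exists>xs. (\<exists>N. \<forall>k\<ge>N. x k = xs) \<and> - gradf xs \<in> limiting_subdiff h xs"
proof -
  obtain N where unsucc: "\<And>k. N \<le> k \<Longrightarrow> \<not> \<rho> k \<ge> ereal \<eta>\<^sub>1"
    and x_const: "\<And>k. N \<le> k \<Longrightarrow> x k = x N"
    using iterates_eventually_constant[OF fin x_next] by blast
  define xs where "xs = x N"
  have sigma_pos: "0 < \<sigma> k" for k
    by (rule regularization_pos[where \<rho> = \<rho> and \<eta>\<^sub>1 = \<eta>\<^sub>1 and \<eta>\<^sub>2 = \<eta>\<^sub>2 and \<gamma>\<^sub>3 = \<gamma>\<^sub>3 and \<gamma>\<^sub>1 = \<gamma>\<^sub>1])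
      (use init params sigma_vs sigma_s sigma_u in simp_all)
  obtain \<kappa> where "0 < \<kappa>" and accuracy: "\<And>k. \<bar>(ereal (f (x k + s k)) + h (x k + s k))
      - (ereal (phi_model f gradf (B k) (x k) (s k)) + \<psi> (x k) (s k))\<bar>
      \<le> ereal (\<kappa> * (1 + mnorm (B k)) * (norm (s k))\<^sup>2)"
    using MA5 by blast
  have h_not_minf: "h y \<noteq> -\<infinity>" and psi_not_minf: "\<psi> y t \<noteq> -\<infinity>" for y t
    using h_proper MA1[of y] unfolding proper_fun_def by blast+
  have psi_zero: "\<psi> y 0 = h y" for y using MA1 by blast
  have h_finite: "\<bar>h (x k)\<bar> \<noteq> \<infinity>" for k
    by (rule iterate_value_finite[OF init(1) h_not_minf psi_not_minf accuracy x_next])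
  have "\<gamma>\<^sub>1 * \<sigma> k \<le> \<sigma> (Suc k)" if "N \<le> k" for k
    using sigma_u unsucc[OF that] by (simp add: not_le)
  then obtain k where "N \<le> k"
    and sigma_large: "2 * \<theta>\<^sub>1 * \<kappa> * \<theta>\<^sub>2\<^sup>2 * (1 + mnorm (Bf xs)) / ((1 - \<eta>\<^sub>1) * (1 - \<theta>\<^sub>1)) < \<sigma> k"
    using geometric_growth_unbounded[of \<gamma>\<^sub>1 \<sigma> N] params(9) sigma_pos[of N] by blast
  then have xk: "x k = xs" using x_const unfolding xs_def by blast
  then have Bk: "B k = Bf xs" using B_def by simp
  have "scp k = 0"
  proof (rule ccontr)
    assume nonzero: "scp k \<noteq> 0"
    have cauchy: "scp k \<in> argmin_set (m_cp f gradf \<psi> (x k) (\<theta>\<^sub>1 / (mnorm (B k) + \<sigma> k)))"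
      using scp_def[of k] nu_def[of k] by simp
    have "0 < (1 - \<eta>\<^sub>1) * (1 - \<theta>\<^sub>1)" using params by simp
    then have large: "2 * \<theta>\<^sub>1 * \<kappa> * \<theta>\<^sub>2\<^sup>2 * (1 + mnorm (B k)) < \<sigma> k * (1 - \<eta>\<^sub>1) * (1 - \<theta>\<^sub>1)"
      using sigma_large Bk by (simp add: divide_less_eq mult.assoc)
    have "ereal \<eta>\<^sub>1 \<le> \<rho> k"
      unfolding rho_def
      using step_successful_if_sigma_large[OF sigma_pos params(1,2) _ _ h_finite psi_zero
            psi_not_minf h_not_minf cauchy st_def s_def _ accuracy nonzero large]
        params \<open>0 < \<kappa>\<close> by force
    then show False using unsucc[OF \<open>N \<le> k\<close>] by simp
  qed
  then have argmin: "0 \<in> argmin_set (m_cp f gradf \<psi> xs (\<nu> k))" using scp_def[of k] xk by simp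
  have nu: "0 < \<nu> k" using nu_def[of k] params sigma_pos[of k] mnorm_nonneg[of "B k"] by simp
  have "- gradf xs \<in> limiting_subdiff h xs"
    by (rule stationary_of_zero_cauchy_point[OF nu argmin]) (use h_finite[of k] MA1[of xs] xk in auto)
  then show ?thesis using x_const xs_def by blast
qed

end
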